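(* Let $K\ge1$ and $T\ge2$ be integers with $N=KT$ odd, let $\eta$ be an integer, and let $a_1,\dots,a_{T-1}$ be binary sequences of period $K$. Let $s=I(0_K,a_1,\dots,a_{T-1})$ and $s'=I(1_K,a_1,\dots,a_{T-1})$ (period $N$), and let $$u=I\big(s',\ L^{4^{-1}+\eta}(s')+1,\ L^{2^{-1}}(s)+1,\ L^{3\cdot 4^{-1}+\eta}(s)+1\big),$$ a binary sequence of period $4N$. For $0\le\mu<4N$ write $\mu=4\mu_1+\mu_2$ with $\mu_2\in\{0,1,2,3\}$, $0\le\mu_1<N$, and set $\tau_2=\langle\mu_1\rangle_T$, $\tau_1^{\pm}=\langle 4^{-1}\pm\eta+\mu_1\rangle_T$, $\tau_2^{\pm}=\langle 3\cdot4^{-1}\pm\eta+\mu_1\rangle_T$. (1) If $d(a_x)=c_1$ for all $x=1,\dots,T-1$ (a constant $c_1$), then $$R_u(\mu)=\begin{cases}4KT&\text{if }\mu=0,\\ 4R_s(\mu_1)&\text{if }\mu_2=0,\ \tau_2=0,\ \mu\ne0,\\ 4R_s(\mu_1)+8c_1&\text{if }\mu_2=0,\ \tau_2\ne0,\\ 0&\text{if }\mu_2=1,\ \tau_1^+=0,\\ -4c_1&\text{if }\mu_2=1,\ \tau_1^+\ne0,\\ 0&\text{if }\mu_2=2,\\ 0&\text{if }\mu_2=3,\ \tau_2^-=0,\\ -4c_1&\text{if }\mu_2=3,\ \tau_2^-\ne0.\end{cases}$$ (2) If $d(a_x)+d(a_{T-x})=0$ for all $x=1,\dots,T-1$, then $$R_u(\mu)=\begin{cases}4KT&\text{if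 }\mu=0,\\ 4R_s(\mu_1)&\text{if }\mu_2=0,\ \mu\ne0,\\ 0&\text{if }\mu_2=1,\ \tau_1^-=0,\\ 4d(a_{\tau_1^-})&\text{if }\mu_2=1,\ \tau_1^-\ne0,\\ 0&\text{if }\mu_2=2,\\ 0&\text{if }\mu_2=3,\ \tau_2^+=0,\\ -4d(a_{\tau_2^+})&\text{if }\mu_2=3,\ \tau_2^+\ne0.\end{cases}$$
   Context: A binary sequence of period $n$ is a map $\mathbb{Z}\to\{0,1\}$ with period $n$ (indices mod $n$). For binary sequences $a,b$ of period $n$, $R_{a,b}(\tau)=\sum_{t=0}^{n-1}(-1)^{a(t)+b(t+\tau)}$ and $R_a=R_{a,a}$. For binary sequences $b_0,\dots,b_{m-1}$ of common period $n$, $I(b_0,\dots,b_{m-1})$ is the binary sequence $v$ of period $nm$ with $v(im+j)=b_j(i)$ for $0\le i\le n-1$, $0\le j\le m-1$. $0_K$, $1_K$ are the all-zero and all-one sequences of period $K$. For a binary sequence $a$ of period $K$, $d(a)=2|\{0\le t\le K-1:a(t)=1\}|-K$. For a sequence $v$ of period $N$ and an integer $m$, $L^m(v)$ is the left shift $L^m(v)(t)=v(t+m)$, and $v+1$ is the complement $t\mapsto v(t)+1 \bmod 2$. Since $N$ is odd, $4^{-1}$ and $2^{-1}$ denote integers with $4\cdot4^{-1}\equiv1$ and $2\cdot2^{-1}\equiv1 \pmod N$ (shifts depend only on their class mod $N$). For an integer $m$, $\langle m\rangle_T\in\{0,\dots,T-1\}$ denotes the residue of $m$ modulo $T$ (well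 defined on classes mod $N$ since $T\mid N$). *)

theory Defs
  imports Main
begin

text \<open>Binary sequences are modelled as maps int => bool (True = 1, False = 0);
 periodicity is stated explicitly where needed.\<close>

definition corr :: "nat \<Rightarrow> (int \<Rightarrow> bool) \<Rightarrow> (int \<Rightarrow> bool) \<Rightarrow> int \<Rightarrow> int" where
  "corr n a b \<tau> = (\<Sum>t\<in>{0..<int n}. (if a t = b (t + \<tau>) then 1 else -1))"

abbreviation acorr :: "nat \<Rightarrow> (int \<Rightarrow> bool) \<Rightarrow> int \<Rightarrow> int" where
  "acorr n a \<equiv> corr n a a"

text \<open>Interleaving I(b_0,...,b_{m-1}) of sequences of common period n, where m = length bs:
 v(i m + j) = b_j(i) for 0 <= i < n, 0 <= j < m, extended with period n m.\<close>
definition interleave :: "nat \<Rightarrow> (int \<Rightarrow> bool) list \<Rightarrow> int \<Rightarrow> bool" where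
  "interleave n bs t = (let m = int (length bs); r = t mod (int n * m)
                        in (bs ! nat (r mod m)) (r div m))"

definition zero_seq :: "int \<Rightarrow> bool" where "zero_seq t = False"
definition one_seq :: "int \<Rightarrow> bool" where "one_seq t = True"

definition dbal :: "nat \<Rightarrow> (int \<Rightarrow> bool) \<Rightarrow> int" where
  "dbal K a = 2 * int (card {t\<in>{0..<int K}. a t}) - int K"

definition lshift :: "int \<Rightarrow> (int \<Rightarrow> bool) \<Rightarrow> int \<Rightarrow> bool" where
  "lshift m v t = v (t + m)"

definition compl_seq :: "(int \<Rightarrow> bool) \<Rightarrow> int \<Rightarrow> bool" where
  "compl_seq v t = (\<not> v t)"

end

theory Submission
  imports Defs
begin

text \<open>Write \<open>\<epsilon>(b) = (-1)^b\<close> (\<open>bsign\<close>) and let \<open>e\<close> (\<open>grid_ind\<close>) be the indicator of the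
  multiples of \<open>T\<close>.
  Since \<open>s'\<close> differs from \<open>s\<close> exactly at the multiples of \<open>T\<close>, we have \<open>\<epsilon>(s') = \<epsilon>(s) - 2e\<close>,
  so every cross-correlation of \<open>s\<close> and \<open>s'\<close> is \<open>R\<^sub>s\<close> plus grid sums
  \<open>D(\<tau>) = \<Sum>\<^sub>i e(i) \<epsilon>(s(i+\<tau>))\<close> and \<open>E(\<tau>) = \<Sum>\<^sub>i e(i) e(i+\<tau>)\<close>.  These are explicit:
  \<open>E(\<tau>) = K[T | \<tau>]\<close> and \<open>D(\<tau>) = -d(a\<^sub>\<langle>\<tau>\<rangle>\<^sub>T)\<close> (or \<open>K\<close> if \<open>T | \<tau>\<close>).  De-interleaving, \<open>R\<^sub>u(4\<mu>\<^sub>1+\<mu>\<^sub>2)\<close>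
  is a signed sum of four such cross-correlations; as \<open>4\<cdot>4\<^sup>-\<^sup>1 \<equiv> 1\<close> and \<open>2\<^sup>-\<^sup>1 \<equiv> 2\<cdot>4\<^sup>-\<^sup>1 (mod N)\<close> (\<open>N\<close> being odd),
  their shifts coincide in pairs, the \<open>R\<^sub>s\<close> terms cancel for \<open>\<mu>\<^sub>2 \<noteq> 0\<close>, and the remaining
  \<open>D\<close>-terms collapse under either hypothesis on the imbalances \<open>d(a\<^sub>x)\<close>.\<close>

section \<open>Periodic functions on the integers\<close>

lemma periodic_add_mult:
  fixes f :: "int \<Rightarrow> 'b"
  assumes "\<And>t. f (t + n) = f t"
  shows "f (t + k * n) = f t"
proof (induction k rule: int_induct[where k=0])
  case base then show ?case by simp
next
  case (step1 i)
  have "f (t + (i + 1) * n) = f ((t + i * n) + n)" by (simp add: algebra_simps)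
  then show ?case using step1 assms by simp
next
  case (step2 i)
  have "f (t + i * n) = f ((t + (i - 1) * n) + n)" by (simp add: algebra_simps)
  then show ?case using step2 assms by simp
qed

lemma periodic_mod:
  fixes f :: "int \<Rightarrow> 'b"
  assumes "\<And>t. f (t + n) = f t"
  shows "f t = f (t mod n)"
proof -
  have "f (t mod n + (t div n) * n) = f (t mod n)" by (rule periodic_add_mult[of f n, OF assms])
  then show ?thesis by (metis mod_div_mult_eq)
qed

lemma periodic_cong:
  fixes f :: "int \<Rightarrow> 'b"
  assumes "\<And>t. f (t + n) = f t" and "n dvd x - y"
  shows "f x = f y"
proof -
  obtain k where "x - y = n * k" using assms(2) by blast
  then have "x = y + k * n" by (simp add: algebra_simps)
  then show ?thesis using periodic_add_mult[of f n, OF assms(1)] by simp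
qed

lemma sum_periodic_shift:
  fixes f :: "int \<Rightarrow> 'b :: comm_monoid_add"
  assumes "\<And>t. f (t + n) = f t" and "n > 0"
  shows "(\<Sum>t\<in>{0..<n}. f (t + c)) = (\<Sum>t\<in>{0..<n}. f t)"
proof -
  have "(\<Sum>t\<in>{0..<n}. f (t + c)) = (\<Sum>t\<in>{0..<n}. f ((t + c) mod n))"
    using periodic_mod[of f n, OF assms(1)] by simp
  also have "\<dots> = (\<Sum>t\<in>{0..<n}. f t)"
  proof (rule sum.reindex_bij_betw)
    show "bij_betw (\<lambda>t. (t + c) mod n) {0..<n} {0..<n}"
    proof (rule bij_betw_byWitness[where f'="\<lambda>t. (t - c) mod n"])
      show "\<forall>a\<in>{0..<n}. ((a + c) mod n - c) mod n = a"
        by (auto simp: mod_simps)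
      show "\<forall>a\<in>{0..<n}. ((a - c) mod n + c) mod n = a"
        by (auto simp: mod_simps)
    qed (use assms(2) in auto)
  qed
  finally show ?thesis .
qed

lemma sum_atLeastLessThan_int_mult:
  fixes g :: "int \<Rightarrow> 'b :: comm_monoid_add"
  assumes "m > 0" "n \<ge> 0"
  shows "(\<Sum>t\<in>{0..<n * m}. g t) = (\<Sum>i\<in>{0..<n}. \<Sum>j\<in>{0..<m}. g (i * m + j))"
proof -
  have range: "0 \<le> i * m + j \<and> i * m + j < n * m" if "0 \<le> i" "i < n" "0 \<le> j" "j < m" for i j
  proof -
    have "(i + 1) * m \<le> n * m" using that assms by (intro mult_right_mono) auto
    then show ?thesis using that assms by (auto simp: algebra_simps)
  qed
  have "(\<Sum>i\<in>{0..<n}. \<Sum>j\<in>{0..<m}. g (i * m + j)) = (\<Sum>p\<in>{0..<n} \<times> {0..<m}. g (fst p * m + snd p))"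
    by (simp add: sum.cartesian_product split_def)
  also have "\<dots> = (\<Sum>t\<in>{0..<n * m}. g t)"
  proof (rule sum.reindex_bij_betw, rule bij_betw_byWitness[where f'="\<lambda>t. (t div m, t mod m)"])
    have "0 \<le> t div m \<and> t div m < n \<and> 0 \<le> t mod m \<and> t mod m < m" if "0 \<le> t" "t < n * m" for t
      using that assms by (auto simp: pos_imp_zdiv_nonneg_iff)
        (smt (verit, best) minus_mod_eq_div_mult mult_right_less_imp_less pos_mod_sign)
    then show "(\<lambda>t. (t div m, t mod m)) ` {0..<n * m} \<subseteq> {0..<n} \<times> {0..<m}"
      by force
    show "(\<lambda>p. fst p * m + snd p) ` ({0..<n} \<times> {0..<m}) \<subseteq> {0..<n * m}"
      using range by force
  qed (use assms in auto)
  finally show ?thesis by simp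
qed

section \<open>Correlation of binary sequences\<close>

definition bsign :: "bool \<Rightarrow> int" where
  "bsign b = (if b then -1 else 1)"

lemma bsign_not [simp]: "bsign (\<not> b) = - bsign b"
  by (simp add: bsign_def)

lemma corr_bsign: "corr n a b \<tau> = (\<Sum>t\<in>{0..<int n}. bsign (a t) * bsign (b (t + \<tau>)))"
  unfolding corr_def by (rule sum.cong) (auto simp: bsign_def)

lemma corr_self_zero: "corr n a a 0 = int n"
  by (simp add: corr_def)

lemma sum_bsign_eq_minus_dbal: "(\<Sum>t\<in>{0..<int K}. bsign (a t)) = - dbal K a"
proof -
  have "(\<Sum>t\<in>{0..<int K}. bsign (a t)) = (\<Sum>t\<in>{0..<int K}. 1 - 2 * of_bool (a t))"
    by (rule sum.cong) (auto simp: bsign_def)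
  also have "\<dots> = int K - 2 * int (card ({0..<int K} \<inter> {t. a t}))"
    by (simp add: sum_subtractf sum_distrib_left[symmetric])
  also have "{0..<int K} \<inter> {t. a t} = {t\<in>{0..<int K}. a t}" by auto
  finally show ?thesis by (simp add: dbal_def)
qed

lemma corr_shifted:
  assumes "\<And>t. x (t + int n) = x t" "\<And>t. y (t + int n) = y t" "n > 0"
  shows "(\<Sum>t\<in>{0..<int n}. c * (bsign (x (t + p)) * bsign (y (t + q)))) = c * corr n x y (q - p)"
proof -
  have "(\<Sum>t\<in>{0..<int n}. bsign (x (t + p)) * bsign (y (t + q)))
      = (\<Sum>t\<in>{0..<int n}. (\<lambda>t. bsign (x t) * bsign (y (t + (q - p)))) (t + p))"
    by simp
  also have "\<dots> = (\<Sum>t\<in>{0..<int n}. bsign (x t) * bsign (y (t + (q - p))))"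
  proof (rule sum_periodic_shift)
    fix t
    have "y (t + int n + (q - p)) = y (t + (q - p))"
      using assms(2)[of "t + (q - p)"] by (simp add: algebra_simps)
    then show "bsign (x (t + int n)) * bsign (y (t + int n + (q - p))) = bsign (x t) * bsign (y (t + (q - p)))"
      using assms(1) by simp
  qed (use assms(3) in simp)
  finally show ?thesis by (simp add: corr_bsign sum_distrib_left[symmetric])
qed

lemma corr_cong:
  assumes "\<And>t. y (t + int n) = y t" and "int n dvd \<tau> - \<tau>'"
  shows "corr n x y \<tau> = corr n x y \<tau>'"
proof -
  have "int n dvd (t + \<tau>) - (t + \<tau>')" for t
    using assms(2) by simp
  then show ?thesis
    unfolding corr_def by (intro sum.cong refl) (metis periodic_cong[of y "int n", OF assms(1)])
qed

section \<open>Interleaving\<close>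

lemma interleave_periodic: "interleave n bs (t + int n * int (length bs)) = interleave n bs t"
  unfolding interleave_def Let_def by simp

lemma interleave_eq_nth:
  assumes "n > 0" "bs \<noteq> []"
    and per: "\<And>j t. j < length bs \<Longrightarrow> (bs ! j) (t + int n) = (bs ! j) t"
  shows "interleave n bs t = (bs ! nat (t mod int (length bs))) (t div int (length bs))"
proof -
  define m where "m = int (length bs)"
  have "m > 0" using assms(2) by (simp add: m_def)
  have r: "t mod (int n * m) = m * (t div m mod int n) + t mod m"
    using zmod_zmult2_eq[of "int n" t m] by (simp add: mult.commute)
  then have r1: "t mod (int n * m) mod m = t mod m" and r2: "t mod (int n * m) div m = t div m mod int n"
    using \<open>m > 0\<close> by (simp_all add: mod_mod_cancel)
  have "nat (t mod m) < length bs" using \<open>m > 0\<close> by (simp add: m_def nat_less_iff)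
  then have "(bs ! nat (t mod m)) (t div m mod int n) = (bs ! nat (t mod m)) (t div m)"
    using periodic_mod[of "bs ! nat (t mod m)" "int n", OF per] by simp
  then show ?thesis unfolding interleave_def Let_def using r1 r2 by (simp add: m_def)
qed

section \<open>The construction\<close>

locale interleaved_construction =
  fixes K T :: nat and \<eta> inv4 inv2 :: int and a :: "nat \<Rightarrow> int \<Rightarrow> bool"
    and s s' u :: "int \<Rightarrow> bool"
  assumes K_pos: "K \<ge> 1" and T_ge_2: "T \<ge> 2" and odd_KT: "odd (K * T)"
    and a_periodic: "\<forall>x\<in>{1..<T}. \<forall>t. a x (t + int K) = a x t"
    and inv4: "(4 * inv4) mod int (K * T) = 1 mod int (K * T)"
    and inv2: "(2 * inv2) mod int (K * T) = 1 mod int (K * T)"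
    and s_def: "s = interleave K (zero_seq # map a [1..<T])"
    and s'_def: "s' = interleave K (one_seq # map a [1..<T])"
    and u_def: "u = interleave (K * T)
               [s', compl_seq (lshift (inv4 + \<eta>) s'), compl_seq (lshift inv2 s),
                compl_seq (lshift (3 * inv4 + \<eta>) s)]"
begin

abbreviation "N \<equiv> int K * int T"

lemma residue_range:
  assumes "\<tau> mod int T \<noteq> 0"
  shows "nat (\<tau> mod int T) \<in> {1..<T}" "T - nat (\<tau> mod int T) \<in> {1..<T}"
proof -
  have "0 \<le> \<tau> mod int T" "\<tau> mod int T < int T" using T_ge_2 by auto
  then show "nat (\<tau> mod int T) \<in> {1..<T}" "T - nat (\<tau> mod int T) \<in> {1..<T}"
    using assms by auto
qed

lemma interleave_head:
  assumes "\<And>t. c t = \<beta>"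
  shows "interleave K (c # map a [1..<T]) t
           = (if t mod int T = 0 then \<beta> else a (nat (t mod int T)) (t div int T))"
proof -
  have "interleave K (c # map a [1..<T]) t = ((c # map a [1..<T]) ! nat (t mod int T)) (t div int T)"
  proof (rule trans[OF interleave_eq_nth])
    fix j t assume "j < length (c # map a [1..<T])"
    then show "((c # map a [1..<T]) ! j) (t + int K) = ((c # map a [1..<T]) ! j) t"
      using a_periodic assms by (cases j) auto
  qed (use K_pos T_ge_2 in auto)
  also have "\<dots> = (if t mod int T = 0 then \<beta> else a (nat (t mod int T)) (t div int T))"
  proof (cases "t mod int T = 0")
    case False
    then obtain j where "nat (t mod int T) = Suc j" "Suc j < T"
      using residue_range(1)[OF False] by (metis atLeastLessThan_iff not0_implies_Suc not_one_le_zero)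
    then show ?thesis using False by simp
  qed (simp add: assms)
  finally show ?thesis .
qed

lemma s_eq: "s t = (if t mod int T = 0 then False else a (nat (t mod int T)) (t div int T))"
  unfolding s_def by (rule interleave_head) (simp add: zero_seq_def)

lemma s'_eq: "s' t = (if t mod int T = 0 then True else a (nat (t mod int T)) (t div int T))"
  unfolding s'_def by (rule interleave_head) (simp add: one_seq_def)

lemma s_periodic: "s (t + N) = s t"
  using interleave_periodic[of K "zero_seq # map a [1..<T]" t] T_ge_2 by (simp add: s_def)

lemma s'_periodic: "s' (t + N) = s' t"
  using interleave_periodic[of K "one_seq # map a [1..<T]" t] T_ge_2 by (simp add: s'_def)

definition grid_ind :: "int \<Rightarrow> int" where
  "grid_ind t = (if t mod int T = 0 then 1 else 0)"

definition grid_corr :: "int \<Rightarrow> int" where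
  "grid_corr \<tau> = (\<Sum>i\<in>{0..<N}. grid_ind i * bsign (s (i + \<tau>)))"

definition grid_acorr :: "int \<Rightarrow> int" where
  "grid_acorr \<tau> = (\<Sum>i\<in>{0..<N}. grid_ind i * grid_ind (i + \<tau>))"

lemma bsign_s': "bsign (s' t) = bsign (s t) - 2 * grid_ind t"
  unfolding s_eq s'_eq grid_ind_def bsign_def by simp

lemma sum_grid: "(\<Sum>i\<in>{0..<N}. grid_ind i * f i) = (\<Sum>i\<in>{0..<int K}. f (i * int T))"
proof -
  have "(\<Sum>i\<in>{0..<N}. grid_ind i * f i)
      = (\<Sum>i\<in>{0..<int K}. \<Sum>j\<in>{0..<int T}. grid_ind (i * int T + j) * f (i * int T + j))"
    by (rule sum_atLeastLessThan_int_mult) (use T_ge_2 in auto)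
  also have "\<dots> = (\<Sum>i\<in>{0..<int K}. \<Sum>j\<in>{0..<int T}. if j = 0 then f (i * int T + j) else 0)"
    by (intro sum.cong refl) (simp add: grid_ind_def mod_mult_self3)
  also have "\<dots> = (\<Sum>i\<in>{0..<int K}. f (i * int T))"
    using T_ge_2 by (simp add: sum.delta)
  finally show ?thesis .
qed

lemma grid_acorr_eq: "grid_acorr \<tau> = (if \<tau> mod int T = 0 then int K else 0)"
  unfolding grid_acorr_def sum_grid by (simp add: grid_ind_def mod_mult_self3)

lemma grid_corr_eq:
  "grid_corr \<tau> = (if \<tau> mod int T = 0 then int K else - dbal K (a (nat (\<tau> mod int T))))"
proof (cases "\<tau> mod int T = 0")
  case True
  then show ?thesis
    unfolding grid_corr_def sum_grid by (simp add: s_eq mod_mult_self3 bsign_def)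
next
  case False
  define r where "r = nat (\<tau> mod int T)"
  have r: "r \<in> {1..<T}" using residue_range(1)[OF False] by (simp add: r_def)
  have "grid_corr \<tau> = (\<Sum>i\<in>{0..<int K}. bsign (a r (i + \<tau> div int T)))"
    unfolding grid_corr_def sum_grid using T_ge_2 False
    by (intro sum.cong refl) (simp add: s_eq mod_mult_self3 r_def)
  also have "\<dots> = (\<Sum>i\<in>{0..<int K}. bsign (a r i))"
    by (rule sum_periodic_shift[where f="\<lambda>i. bsign (a r i)"]) (use a_periodic r K_pos in auto)
  also have "\<dots> = - dbal K (a r)" by (rule sum_bsign_eq_minus_dbal)
  finally show ?thesis using False by (simp add: r_def)
qed

lemma grid_corr_uminus:
  "grid_corr (- \<tau>) = (if \<tau> mod int T = 0 then int K else - dbal K (a (T - nat (\<tau> mod int T))))"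
proof (cases "\<tau> mod int T = 0")
  case False
  have "0 \<le> \<tau> mod int T" "\<tau> mod int T < int T" using T_ge_2 by auto
  then have "(- \<tau>) mod int T = int T - \<tau> mod int T" "int T - \<tau> mod int T \<noteq> 0"
    using False by (simp_all add: zmod_zminus1_eq_if)
  moreover have "nat (int T - \<tau> mod int T) = T - nat (\<tau> mod int T)"
    using \<open>0 \<le> \<tau> mod int T\<close> by (simp add: nat_diff_distrib)
  ultimately show ?thesis using False unfolding grid_corr_eq by simp
qed (simp add: grid_corr_eq zmod_zminus1_eq_if)

lemma KT_pos: "K * T > 0"
  using K_pos T_ge_2 by simp

lemma sum_bsign_s_grid_ind: "(\<Sum>i\<in>{0..<N}. bsign (s i) * grid_ind (i + \<tau>)) = grid_corr (- \<tau>)"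
proof -
  have "(\<Sum>i\<in>{0..<N}. bsign (s i) * grid_ind (i + \<tau>))
      = (\<Sum>i\<in>{0..<N}. (\<lambda>j. grid_ind j * bsign (s (j - \<tau>))) (i + \<tau>))"
    by (simp add: mult.commute)
  also have "\<dots> = (\<Sum>i\<in>{0..<N}. grid_ind i * bsign (s (i - \<tau>)))"
  proof (rule sum_periodic_shift)
    fix t
    have "s (t + N - \<tau>) = s (t - \<tau>)" using s_periodic[of "t - \<tau>"] by (simp add: algebra_simps)
    then show "grid_ind (t + N) * bsign (s (t + N - \<tau>)) = grid_ind t * bsign (s (t - \<tau>))"
      by (simp add: grid_ind_def mult.commute)
  qed (use KT_pos in simp)
  finally show ?thesis by (simp add: grid_corr_def)
qed

lemma corr_s'_s: "corr (K * T) s' s \<tau> = corr (K * T) s s \<tau> - 2 * grid_corr \<tau>"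
  unfolding corr_bsign grid_corr_def bsign_s'
  by (simp add: left_diff_distrib sum_subtractf sum_distrib_left mult.assoc)

lemma corr_s_s': "corr (K * T) s s' \<tau> = corr (K * T) s s \<tau> - 2 * grid_corr (- \<tau>)"
proof -
  have "corr (K * T) s s' \<tau>
      = corr (K * T) s s \<tau> - 2 * (\<Sum>i\<in>{0..<N}. bsign (s i) * grid_ind (i + \<tau>))"
    unfolding corr_bsign bsign_s'
    by (simp add: right_diff_distrib sum_subtractf sum_distrib_left mult.assoc mult.left_commute)
  then show ?thesis by (simp only: sum_bsign_s_grid_ind)
qed

lemma corr_s'_s':
  "corr (K * T) s' s' \<tau> = corr (K * T) s s \<tau> - 2 * grid_corr \<tau> - 2 * grid_corr (- \<tau>) + 4 * grid_acorr \<tau>"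
proof -
  have "corr (K * T) s' s' \<tau> = corr (K * T) s s \<tau> - 2 * grid_corr \<tau>
      - 2 * (\<Sum>i\<in>{0..<N}. bsign (s i) * grid_ind (i + \<tau>)) + 4 * grid_acorr \<tau>"
    unfolding corr_bsign grid_corr_def grid_acorr_def bsign_s'
    by (simp add: algebra_simps sum_subtractf sum.distrib sum_distrib_left)
  then show ?thesis by (simp only: sum_bsign_s_grid_ind)
qed

lemma dvd_inv4: "int (K * T) dvd 4 * inv4 - 1"
  using inv4 by (simp add: mod_eq_dvd_iff)

lemma dvd_inv2: "int (K * T) dvd inv2 - 2 * inv4"
proof -
  have "int (K * T) dvd 2 * inv2 - 1"
    using inv2 by (simp add: mod_eq_dvd_iff)
  then have "int (K * T) dvd (2 * inv2 - 1) - (4 * inv4 - 1)"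
    using dvd_inv4 by (rule dvd_diff)
  then have "int (K * T) dvd 2 * (inv2 - 2 * inv4)" by (simp add: algebra_simps)
  moreover have "coprime (int (K * T)) 2" using odd_KT by simp
  ultimately show ?thesis using coprime_dvd_mult_right_iff by blast
qed

lemma corr_cong_inverses:
  assumes "\<And>t. y (t + N) = y t"
    and "\<tau> - \<tau>' = ka * (inv2 - 2 * inv4) + kb * (4 * inv4 - 1)"
  shows "corr (K * T) x y \<tau> = corr (K * T) x y \<tau>'"
  using assms dvd_inv2 dvd_inv4 by (intro corr_cong) simp_all

abbreviation "u_components \<equiv> [s', compl_seq (lshift (inv4 + \<eta>) s'), compl_seq (lshift inv2 s),
                compl_seq (lshift (3 * inv4 + \<eta>) s)]"

lemma u_eq: "u (i * 4 + j) = (u_components ! nat (j mod 4)) (i + j div 4)"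
proof -
  have "u (i * 4 + j) = (u_components ! nat ((i * 4 + j) mod 4)) ((i * 4 + j) div 4)"
    unfolding u_def
  proof (rule trans[OF interleave_eq_nth])
    fix k t assume "k < length u_components"
    then have "k = 0 \<or> k = 1 \<or> k = 2 \<or> k = 3" by auto
    moreover have "s (t + N + c) = s (t + c)" "s' (t + N + c) = s' (t + c)" for c
      using s_periodic[of "t + c"] s'_periodic[of "t + c"] by (simp_all add: algebra_simps)
    ultimately show "(u_components ! k) (t + int (K * T)) = (u_components ! k) t"
      using s'_periodic by (auto simp: compl_seq_def lshift_def)
  qed (use KT_pos in simp_all)
  then show ?thesis by simp
qed

lemma acorr_u_deinterleave: "corr (4 * (K * T)) u u (\<mu>1 * 4 + k) =
  (\<Sum>i\<in>{0..<N}. \<Sum>j\<in>{0, 1, 2, 3}. bsign ((u_components ! nat j) i) *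
       bsign ((u_components ! nat ((j + k) mod 4)) (i + \<mu>1 + (j + k) div 4)))"
proof -
  have "corr (4 * (K * T)) u u (\<mu>1 * 4 + k)
      = (\<Sum>t\<in>{0..<N * 4}. bsign (u t) * bsign (u (t + (\<mu>1 * 4 + k))))"
    unfolding corr_bsign by (simp add: mult.commute mult.left_commute)
  also have "\<dots> = (\<Sum>i\<in>{0..<N}. \<Sum>j\<in>{0..<4}. bsign (u (i * 4 + j)) * bsign (u (i * 4 + j + (\<mu>1 * 4 + k))))"
    by (rule sum_atLeastLessThan_int_mult) simp_all
  also have "{0..<4::int} = {0, 1, 2, 3}" by auto
  also have "(\<Sum>i\<in>{0..<N}. \<Sum>j\<in>{0, 1, 2, 3}. bsign (u (i * 4 + j)) * bsign (u (i * 4 + j + (\<mu>1 * 4 + k))))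
      = (\<Sum>i\<in>{0..<N}. \<Sum>j\<in>{0, 1, 2, 3}. bsign ((u_components ! nat j) i) *
           bsign ((u_components ! nat ((j + k) mod 4)) (i + \<mu>1 + (j + k) div 4)))"
  proof (intro sum.cong refl)
    fix i j :: int assume "j \<in> {0, 1, 2, 3}"
    then have "u (i * 4 + j) = (u_components ! nat j) i"
      using u_eq[of i j] by auto
    moreover have "u (i * 4 + j + (\<mu>1 * 4 + k))
        = (u_components ! nat ((j + k) mod 4)) (i + \<mu>1 + (j + k) div 4)"
      using u_eq[of "i + \<mu>1" "j + k"] by (simp add: algebra_simps)
    ultimately show "bsign (u (i * 4 + j)) * bsign (u (i * 4 + j + (\<mu>1 * 4 + k)))
        = bsign ((u_components ! nat j) i) *
          bsign ((u_components ! nat ((j + k) mod 4)) (i + \<mu>1 + (j + k) div 4))"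
      by simp
  qed
  finally show ?thesis .
qed

text \<open>The residue lemmas below write the four de-interleaved sums in the uniform shape
  \<open>c \<cdot> \<epsilon>(x(t+p)) \<epsilon>(y(t+q))\<close>, zero shifts included, so that rewriting with these instances
  turns them into correlations; \<open>corr_cong_inverses\<close> then identifies shifts that agree modulo \<open>N\<close>.\<close>

lemmas corr_shifted_s_s' =
  corr_shifted[of s' "K * T" s', unfolded of_nat_mult, OF s'_periodic s'_periodic KT_pos]
  corr_shifted[of s' "K * T" s, unfolded of_nat_mult, OF s'_periodic s_periodic KT_pos]
  corr_shifted[of s "K * T" s, unfolded of_nat_mult, OF s_periodic s_periodic KT_pos]
  corr_shifted[of s "K * T" s', unfolded of_nat_mult, OF s_periodic s'_periodic KT_pos]

lemma acorr_u_residue_0: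
  assumes "\<mu> mod 4 = 0"
  shows "corr (4 * (K * T)) u u \<mu> =
   4 * corr (K * T) s s (\<mu> div 4) - 4 * grid_corr (\<mu> div 4) - 4 * grid_corr (- (\<mu> div 4)) + 8 * grid_acorr (\<mu> div 4)"
proof -
  define \<mu>1 where "\<mu>1 = \<mu> div 4"
  have \<mu>_eq: "\<mu> = \<mu>1 * 4 + 0" using assms div_mult_mod_eq[of \<mu> 4] unfolding \<mu>1_def by linarith
  have "corr (4 * (K * T)) u u \<mu> =
    (\<Sum>i\<in>{0..<N}. 1 * (bsign (s' (i + 0)) * bsign (s' (i + (\<mu>1 + 0))))) +
    (\<Sum>i\<in>{0..<N}. 1 * (bsign (s' (i + (inv4 + \<eta>))) * bsign (s' (i + (\<mu>1 + (inv4 + \<eta>)))))) +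
    (\<Sum>i\<in>{0..<N}. 1 * (bsign (s (i + inv2)) * bsign (s (i + (\<mu>1 + inv2))))) +
    (\<Sum>i\<in>{0..<N}. 1 * (bsign (s (i + (3 * inv4 + \<eta>))) * bsign (s (i + (\<mu>1 + (3 * inv4 + \<eta>))))))"
    unfolding \<mu>_eq acorr_u_deinterleave sum.distrib[symmetric]
    by (rule sum.cong) (simp_all add: compl_seq_def lshift_def algebra_simps)
  also have "\<dots> = 1 * corr (K * T) s' s' ((\<mu>1 + 0) - 0)
      + 1 * corr (K * T) s' s' ((\<mu>1 + (inv4 + \<eta>)) - (inv4 + \<eta>))
      + 1 * corr (K * T) s s ((\<mu>1 + inv2) - inv2)
      + 1 * corr (K * T) s s ((\<mu>1 + (3 * inv4 + \<eta>)) - (3 * inv4 + \<eta>))"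
    by (simp only: corr_shifted_s_s')
  finally show ?thesis unfolding corr_s'_s' by (simp add: algebra_simps \<mu>1_def)
qed

lemma acorr_u_residue_1:
  assumes "\<mu> mod 4 = 1"
  shows "corr (4 * (K * T)) u u \<mu> =
   2 * grid_corr (inv4 + \<eta> + (\<mu> div 4)) + 2 * grid_corr (- (inv4 + \<eta> + (\<mu> div 4)))
   - 4 * grid_acorr (inv4 + \<eta> + (\<mu> div 4))
   - 2 * grid_corr (inv4 - \<eta> + (\<mu> div 4)) + 2 * grid_corr (- (inv4 - \<eta> + (\<mu> div 4)))"
proof -
  define \<mu>1 where "\<mu>1 = \<mu> div 4"
  have \<mu>_eq: "\<mu> = \<mu>1 * 4 + 1" using assms div_mult_mod_eq[of \<mu> 4] unfolding \<mu>1_def by linarith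
  have "corr (4 * (K * T)) u u \<mu> =
    (\<Sum>i\<in>{0..<N}. (-1) * (bsign (s' (i + 0)) * bsign (s' (i + (\<mu>1 + (inv4 + \<eta>)))))) +
    (\<Sum>i\<in>{0..<N}. 1 * (bsign (s' (i + (inv4 + \<eta>))) * bsign (s (i + (\<mu>1 + inv2))))) +
    (\<Sum>i\<in>{0..<N}. 1 * (bsign (s (i + inv2)) * bsign (s (i + (\<mu>1 + (3 * inv4 + \<eta>)))))) +
    (\<Sum>i\<in>{0..<N}. (-1) * (bsign (s (i + (3 * inv4 + \<eta>))) * bsign (s' (i + (\<mu>1 + 1)))))"
    unfolding \<mu>_eq acorr_u_deinterleave sum.distrib[symmetric]
    by (rule sum.cong) (simp_all add: compl_seq_def lshift_def algebra_simps)
  also have "\<dots> = (-1) * corr (K * T) s' s' ((\<mu>1 + (inv4 + \<eta>)) - 0)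
      + 1 * corr (K * T) s' s ((\<mu>1 + inv2) - (inv4 + \<eta>))
      + 1 * corr (K * T) s s ((\<mu>1 + (3 * inv4 + \<eta>)) - inv2)
      + (-1) * corr (K * T) s s' ((\<mu>1 + 1) - (3 * inv4 + \<eta>))"
    by (simp only: corr_shifted_s_s')
  also have "corr (K * T) s' s ((\<mu>1 + inv2) - (inv4 + \<eta>)) = corr (K * T) s' s (inv4 - \<eta> + \<mu>1)"
    by (rule corr_cong_inverses[where ka=1 and kb=0]) (simp_all add: s_periodic algebra_simps)
  also have "corr (K * T) s s ((\<mu>1 + (3 * inv4 + \<eta>)) - inv2) = corr (K * T) s s (inv4 + \<eta> + \<mu>1)"
    by (rule corr_cong_inverses[where ka="-1" and kb=0]) (simp_all add: s_periodic algebra_simps)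
  also have "corr (K * T) s s' ((\<mu>1 + 1) - (3 * inv4 + \<eta>)) = corr (K * T) s s' (inv4 - \<eta> + \<mu>1)"
    by (rule corr_cong_inverses[where ka=0 and kb="-1"]) (simp_all add: s'_periodic algebra_simps)
  finally show ?thesis unfolding corr_s'_s corr_s_s' corr_s'_s' by (simp add: algebra_simps \<mu>1_def)
qed

lemma acorr_u_residue_2:
  assumes "\<mu> mod 4 = 2"
  shows "corr (4 * (K * T)) u u \<mu> = 0"
proof -
  define \<mu>1 where "\<mu>1 = \<mu> div 4"
  have \<mu>_eq: "\<mu> = \<mu>1 * 4 + 2" using assms div_mult_mod_eq[of \<mu> 4] unfolding \<mu>1_def by linarith
  have "corr (4 * (K * T)) u u \<mu> =
    (\<Sum>i\<in>{0..<N}. (-1) * (bsign (s' (i + 0)) * bsign (s (i + (\<mu>1 + inv2))))) +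
    (\<Sum>i\<in>{0..<N}. 1 * (bsign (s' (i + (inv4 + \<eta>))) * bsign (s (i + (\<mu>1 + (3 * inv4 + \<eta>)))))) +
    (\<Sum>i\<in>{0..<N}. (-1) * (bsign (s (i + inv2)) * bsign (s' (i + (\<mu>1 + 1))))) +
    (\<Sum>i\<in>{0..<N}. 1 * (bsign (s (i + (3 * inv4 + \<eta>))) * bsign (s' (i + (\<mu>1 + 1 + (inv4 + \<eta>))))))"
    unfolding \<mu>_eq acorr_u_deinterleave sum.distrib[symmetric]
    by (rule sum.cong) (simp_all add: compl_seq_def lshift_def algebra_simps)
  also have "\<dots> = (-1) * corr (K * T) s' s ((\<mu>1 + inv2) - 0)
      + 1 * corr (K * T) s' s ((\<mu>1 + (3 * inv4 + \<eta>)) - (inv4 + \<eta>))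
      + (-1) * corr (K * T) s s' ((\<mu>1 + 1) - inv2)
      + 1 * corr (K * T) s s' ((\<mu>1 + 1 + (inv4 + \<eta>)) - (3 * inv4 + \<eta>))"
    by (simp only: corr_shifted_s_s')
  also have "corr (K * T) s' s ((\<mu>1 + (3 * inv4 + \<eta>)) - (inv4 + \<eta>)) = corr (K * T) s' s ((\<mu>1 + inv2) - 0)"
    by (rule corr_cong_inverses[where ka="-1" and kb=0]) (simp_all add: s_periodic algebra_simps)
  also have "corr (K * T) s s' ((\<mu>1 + 1) - inv2) = corr (K * T) s s' ((\<mu>1 + inv2) - 0)"
    by (rule corr_cong_inverses[where ka="-2" and kb="-1"]) (simp_all add: s'_periodic algebra_simps)
  also have "corr (K * T) s s' ((\<mu>1 + 1 + (inv4 + \<eta>)) - (3 * inv4 + \<eta>)) = corr (K * T) s s' ((\<mu>1 + inv2) - 0)"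
    by (rule corr_cong_inverses[where ka="-1" and kb="-1"]) (simp_all add: s'_periodic algebra_simps)
  finally show ?thesis by simp
qed

lemma acorr_u_residue_3:
  assumes "\<mu> mod 4 = 3"
  shows "corr (4 * (K * T)) u u \<mu> =
   2 * grid_corr (3 * inv4 + \<eta> + (\<mu> div 4)) - 2 * grid_corr (- (3 * inv4 + \<eta> + (\<mu> div 4)))
   + 2 * grid_corr (3 * inv4 - \<eta> + (\<mu> div 4)) + 2 * grid_corr (- (3 * inv4 - \<eta> + (\<mu> div 4)))
   - 4 * grid_acorr (3 * inv4 - \<eta> + (\<mu> div 4))"
proof -
  define \<mu>1 where "\<mu>1 = \<mu> div 4"
  have \<mu>_eq: "\<mu> = \<mu>1 * 4 + 3" using assms div_mult_mod_eq[of \<mu> 4] unfolding \<mu>1_def by linarith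
  have "corr (4 * (K * T)) u u \<mu> =
    (\<Sum>i\<in>{0..<N}. (-1) * (bsign (s' (i + 0)) * bsign (s (i + (\<mu>1 + (3 * inv4 + \<eta>)))))) +
    (\<Sum>i\<in>{0..<N}. (-1) * (bsign (s' (i + (inv4 + \<eta>))) * bsign (s' (i + (\<mu>1 + 1))))) +
    (\<Sum>i\<in>{0..<N}. 1 * (bsign (s (i + inv2)) * bsign (s' (i + (\<mu>1 + 1 + (inv4 + \<eta>)))))) +
    (\<Sum>i\<in>{0..<N}. 1 * (bsign (s (i + (3 * inv4 + \<eta>))) * bsign (s (i + (\<mu>1 + 1 + inv2)))))"
    unfolding \<mu>_eq acorr_u_deinterleave sum.distrib[symmetric]
    by (rule sum.cong) (simp_all add: compl_seq_def lshift_def algebra_simps)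
  also have "\<dots> = (-1) * corr (K * T) s' s ((\<mu>1 + (3 * inv4 + \<eta>)) - 0)
      + (-1) * corr (K * T) s' s' ((\<mu>1 + 1) - (inv4 + \<eta>))
      + 1 * corr (K * T) s s' ((\<mu>1 + 1 + (inv4 + \<eta>)) - inv2)
      + 1 * corr (K * T) s s ((\<mu>1 + 1 + inv2) - (3 * inv4 + \<eta>))"
    by (simp only: corr_shifted_s_s')
  also have "corr (K * T) s' s' ((\<mu>1 + 1) - (inv4 + \<eta>)) = corr (K * T) s' s' (3 * inv4 - \<eta> + \<mu>1)"
    by (rule corr_cong_inverses[where ka=0 and kb="-1"]) (simp_all add: s'_periodic algebra_simps)
  also have "corr (K * T) s s' ((\<mu>1 + 1 + (inv4 + \<eta>)) - inv2) = corr (K * T) s s' (3 * inv4 + \<eta> + \<mu>1)"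
    by (rule corr_cong_inverses[where ka="-1" and kb="-1"]) (simp_all add: s'_periodic algebra_simps)
  also have "corr (K * T) s s ((\<mu>1 + 1 + inv2) - (3 * inv4 + \<eta>)) = corr (K * T) s s (3 * inv4 - \<eta> + \<mu>1)"
    by (rule corr_cong_inverses[where ka=1 and kb="-1"]) (simp_all add: s_periodic algebra_simps)
  finally show ?thesis unfolding corr_s'_s corr_s_s' corr_s'_s' by (simp add: algebra_simps \<mu>1_def)
qed

lemma acorr_u_constant_imbalance:
  assumes c1: "\<forall>x\<in>{1..<T}. dbal K (a x) = c1" and \<mu>: "\<mu> \<in> {0..<4 * int (K * T)}"
  shows "let \<mu>1 = \<mu> div 4; \<mu>2 = \<mu> mod 4;
             \<tau>2 = \<mu>1 mod int T;
             \<tau>1p = (inv4 + \<eta> + \<mu>1) mod int T;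
             \<tau>2m = (3 * inv4 - \<eta> + \<mu>1) mod int T
         in corr (4 * (K * T)) u u \<mu> =
            (if \<mu> = 0 then 4 * int K * int T
             else if \<mu>2 = 0 \<and> \<tau>2 = 0 then 4 * corr (K * T) s s \<mu>1
             else if \<mu>2 = 0 then 4 * corr (K * T) s s \<mu>1 + 8 * c1
             else if \<mu>2 = 1 \<and> \<tau>1p = 0 then 0
             else if \<mu>2 = 1 then -4 * c1
             else if \<mu>2 = 2 then 0
             else if \<tau>2m = 0 then 0
             else -4 * c1)"
proof -
  have D: "grid_corr \<tau> = (if \<tau> mod int T = 0 then int K else - c1)" for \<tau>
    using c1 residue_range[of \<tau>] unfolding grid_corr_eq by auto
  have D_uminus: "grid_corr (- \<tau>) = (if \<tau> mod int T = 0 then int K else - c1)" for \<tau>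
    using c1 residue_range[of \<tau>] unfolding grid_corr_uminus by auto
  consider "\<mu> mod 4 = 0" | "\<mu> mod 4 = 1" | "\<mu> mod 4 = 2" | "\<mu> mod 4 = 3" by linarith
  then show ?thesis
  proof cases
    case 1
    then show ?thesis using acorr_u_residue_0[OF 1, unfolded D_uminus] \<mu>
      by (simp add: Let_def D grid_acorr_eq corr_self_zero)
  next
    case 2
    then have "\<mu> \<noteq> 0" by auto
    then show ?thesis using acorr_u_residue_1[OF 2, unfolded D_uminus] 2 by (simp add: Let_def D grid_acorr_eq)
  next
    case 3
    then have "\<mu> \<noteq> 0" by auto
    then show ?thesis using acorr_u_residue_2[OF 3] 3 by (simp add: Let_def)
  next
    case 4
    then have "\<mu> \<noteq> 0" by auto
    then show ?thesis using acorr_u_residue_3[OF 4, unfolded D_uminus] 4 by (simp add: Let_def D grid_acorr_eq)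
  qed
qed

lemma acorr_u_antisymmetric_imbalance:
  assumes antisym: "\<forall>x\<in>{1..<T}. dbal K (a x) + dbal K (a (T - x)) = 0"
    and \<mu>: "\<mu> \<in> {0..<4 * int (K * T)}"
  shows "let \<mu>1 = \<mu> div 4; \<mu>2 = \<mu> mod 4;
             \<tau>1m = (inv4 - \<eta> + \<mu>1) mod int T;
             \<tau>2p = (3 * inv4 + \<eta> + \<mu>1) mod int T
         in corr (4 * (K * T)) u u \<mu> =
            (if \<mu> = 0 then 4 * int K * int T
             else if \<mu>2 = 0 then 4 * corr (K * T) s s \<mu>1
             else if \<mu>2 = 1 \<and> \<tau>1m = 0 then 0
             else if \<mu>2 = 1 then 4 * dbal K (a (nat \<tau>1m))
             else if \<mu>2 = 2 then 0
             else if \<tau>2p = 0 then 0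
             else -4 * dbal K (a (nat \<tau>2p)))"
proof -
  have D_uminus: "grid_corr (- \<tau>) = (if \<tau> mod int T = 0 then int K else dbal K (a (nat (\<tau> mod int T))))" for \<tau>
  proof (cases "\<tau> mod int T = 0")
    case False
    then have "dbal K (a (T - nat (\<tau> mod int T))) = - dbal K (a (nat (\<tau> mod int T)))"
      using antisym residue_range(1)[OF False] by force
    then show ?thesis using False unfolding grid_corr_uminus by simp
  qed (simp add: grid_corr_uminus)
  consider "\<mu> mod 4 = 0" | "\<mu> mod 4 = 1" | "\<mu> mod 4 = 2" | "\<mu> mod 4 = 3" by linarith
  then show ?thesis
  proof cases
    case 1
    then show ?thesis using acorr_u_residue_0[OF 1, unfolded D_uminus] \<mu>
      by (simp add: Let_def grid_corr_eq grid_acorr_eq corr_self_zero)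
  next
    case 2
    then have "\<mu> \<noteq> 0" by auto
    then show ?thesis using acorr_u_residue_1[OF 2, unfolded D_uminus] 2 by (simp add: Let_def grid_corr_eq grid_acorr_eq)
  next
    case 3
    then have "\<mu> \<noteq> 0" by auto
    then show ?thesis using acorr_u_residue_2[OF 3] 3 by (simp add: Let_def)
  next
    case 4
    then have "\<mu> \<noteq> 0" by auto
    then show ?thesis using acorr_u_residue_3[OF 4, unfolded D_uminus] 4 by (simp add: Let_def grid_corr_eq grid_acorr_eq)
  qed
qed

end

theorem theorem3:
  fixes K T :: nat and \<eta> inv4 inv2 c1 :: int and a :: "nat \<Rightarrow> int \<Rightarrow> bool"
    and s s' u :: "int \<Rightarrow> bool"
  assumes "K \<ge> 1" and "T \<ge> 2" and "odd (K * T)"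
    and "\<forall>x\<in>{1..<T}. \<forall>t. a x (t + int K) = a x t"
    and "(4 * inv4) mod int (K * T) = 1 mod int (K * T)"
    and "(2 * inv2) mod int (K * T) = 1 mod int (K * T)"
    and "s = interleave K (zero_seq # map a [1..<T])"
    and "s' = interleave K (one_seq # map a [1..<T])"
    and "u = interleave (K * T)
               [s', compl_seq (lshift (inv4 + \<eta>) s'), compl_seq (lshift inv2 s),
                compl_seq (lshift (3 * inv4 + \<eta>) s)]"
  shows
   "((\<forall>x\<in>{1..<T}. dbal K (a x) = c1) \<longrightarrow>
      (\<forall>\<mu>\<in>{0..<4 * int (K * T)}.
        (let \<mu>1 = \<mu> div 4; \<mu>2 = \<mu> mod 4;
             \<tau>2 = \<mu>1 mod int T;
             \<tau>1p = (inv4 + \<eta> + \<mu>1) mod int T;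
             \<tau>2m = (3 * inv4 - \<eta> + \<mu>1) mod int T
         in acorr (4 * (K * T)) u \<mu> =
            (if \<mu> = 0 then 4 * int K * int T
             else if \<mu>2 = 0 \<and> \<tau>2 = 0 then 4 * acorr (K * T) s \<mu>1
             else if \<mu>2 = 0 then 4 * acorr (K * T) s \<mu>1 + 8 * c1
             else if \<mu>2 = 1 \<and> \<tau>1p = 0 then 0
             else if \<mu>2 = 1 then -4 * c1
             else if \<mu>2 = 2 then 0
             else if \<tau>2m = 0 then 0
             else -4 * c1))))
    \<and>
    ((\<forall>x\<in>{1..<T}. dbal K (a x) + dbal K (a (T - x)) = 0) \<longrightarrow>
      (\<forall>\<mu>\<in>{0..<4 * int (K * T)}.
        (let \<mu>1 = \<mu> div 4; \<mu>2 = \<mu> mod 4;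
             \<tau>1m = (inv4 - \<eta> + \<mu>1) mod int T;
             \<tau>2p = (3 * inv4 + \<eta> + \<mu>1) mod int T
         in acorr (4 * (K * T)) u \<mu> =
            (if \<mu> = 0 then 4 * int K * int T
             else if \<mu>2 = 0 then 4 * acorr (K * T) s \<mu>1
             else if \<mu>2 = 1 \<and> \<tau>1m = 0 then 0
             else if \<mu>2 = 1 then 4 * dbal K (a (nat \<tau>1m))
             else if \<mu>2 = 2 then 0
             else if \<tau>2p = 0 then 0
             else -4 * dbal K (a (nat \<tau>2p))))))"
proof -
  interpret interleaved_construction K T \<eta> inv4 inv2 a s s' u
    using assms by unfold_locales
  show ?thesis
    using acorr_u_constant_imbalance acorr_u_antisymmetric_imbalance by blast
qed

end
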